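(* Let $N\ge 2$, $C\ge 0$ and $k\ge 1$ be integers with $C<\frac{N-1}{2}$, $k\le N-1$, and $$\binom{N-1-C}{k}\ \ge\ \frac{1}{2}\binom{N-1}{k}.$$ Let $\mathcal{A}$ be a discrete (finite or countable) action space, $\mathcal{O}$ an observation space and $\mathcal{M}$ a message space, and let $\hat{\pi}:\mathcal{O}\times\mathcal{M}^k\to\mathcal{A}$ be any function (the ablation policy). Fix an observation $o\in\mathcal{O}$ and two message lists $\mathbf{m}_{\mathrm{benign}},\mathbf{m}_{\mathrm{adv}}\in\mathcal{M}^{N-1}$ that differ in at most $C$ coordinates. Define the benign action set $$\mathcal{A}_{\mathrm{benign}}:=\bigcup_{T\in\mathcal{H}(N-1,k)}\{\hat{\pi}(o,\mathsf{Ablate}(\mathbf{m}_{\mathrm{benign}},T))\},$$ for each $a\in\mathcal{A}$ define the vote count on the adversarial list $$u_a:=\sum_{T\in\mathcal{H}(N-1,k)}\mathbb{1}\big[\hat{\pi}(o,\mathsf{Ablate}(\mathbf{m}_{\mathrm{adv}},T))=a\big],$$ and let $\widetilde{a}=\widetilde{\pi}(o,\mathbf{m}_{\mathrm{adv}})\in\arg\max_{a\in\mathcal{A}}u_a$. If $$u_{\widetilde{a}}>\binom{N-1}{k}-\binom{N-1-C}{k},$$ then $\widetilde{a}\in\mathcal{A}_{\mathrm{benign}}$.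
   Context: For a list $\mathbf{m}=[m_1,\dots,m_n]$ and a set of indices $T=\{j_1<\dots<j_k\}\subseteq[n]$, $\mathsf{Ablate}(\mathbf{m},T):=[m_{j_1},\dots,m_{j_k}]$ keeps only the entries indexed by $T$. For integers $n\ge k\ge 1$, $\mathcal{H}(n,k)$ denotes the set of all $k$-element subsets of $[n]=\{1,\dots,n\}$, so $|\mathcal{H}(n,k)|=\binom{n}{k}$. Setting: an agent in a communicative multi-agent system receives $N-1$ messages from the other agents; an adversary may corrupt up to $C$ of them, so the received list $\mathbf{m}_{\mathrm{adv}}$ differs from the uncorrupted list $\mathbf{m}_{\mathrm{benign}}$ in at most $C$ positions. The ensemble policy $\widetilde{\pi}(o,\mathbf{m})$ outputs an action maximizing the number of size-$k$ index subsets $T$ on which $\hat{\pi}(o,\mathsf{Ablate}(\mathbf{m},T))$ equals that action. *)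

theory Defs
  imports Main "HOL-Library.Countable"
begin

text \<open>Indices are 0-based: a message list of length n is indexed by {0..<n}.\<close>

definition Ablate :: "'m list \<Rightarrow> nat set \<Rightarrow> 'm list" where
  "Ablate m T = nths m T"

definition H :: "nat \<Rightarrow> nat \<Rightarrow> nat set set" where
  "H n k = {T. T \<subseteq> {..<n} \<and> card T = k}"

definition benign_actions ::
  "('o \<Rightarrow> 'm list \<Rightarrow> 'a) \<Rightarrow> 'o \<Rightarrow> 'm list \<Rightarrow> nat \<Rightarrow> nat \<Rightarrow> 'a set" where
  "benign_actions pihat obs m n k = (\<Union>T\<in>H n k. {pihat obs (Ablate m T)})"

definition votes ::
  "('o \<Rightarrow> 'm list \<Rightarrow> 'a) \<Rightarrow> 'o \<Rightarrow> 'm list \<Rightarrow> nat \<Rightarrow> nat \<Rightarrow> 'a \<Rightarrow> nat" where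
  "votes pihat obs m n k a = (\<Sum>T\<in>H n k. if pihat obs (Ablate m T) = a then 1 else 0)"

end

theory Submission
  imports Defs
begin

text \<open>A size-k index set that avoids the at most C positions where the two message lists
differ ablates both lists to the same sublist, so its vote is a benign action. There are at
least (n - C) choose k such sets, hence an action outside the benign set collects at most
(n choose k) - ((n - C) choose k) votes on the adversarial list.\<close>

lemma nths_cong:
  assumes "length xs = length ys"
    and "\<And>i. i \<in> T \<Longrightarrow> i < length xs \<Longrightarrow> xs ! i = ys ! i"
  shows "nths xs T = nths ys T"
  using assms
proof (induction xs ys arbitrary: T rule: list_induct2)
  case Nil
  then show ?case by simp
next
  case (Cons x xs y ys)
  have "0 \<in> T \<Longrightarrow> x = y" using Cons.prems by force
  moreover have "nths xs {j. Suc j \<in> T} = nths ys {j. Suc j \<in> T}"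
    using Cons.hyps Cons.prems[of "Suc _"] by (intro Cons.IH) auto
  ultimately show ?case by (auto simp: nths_Cons)
qed

lemma finite_H: "finite (H n k)"
  unfolding H_def by (rule finite_subset[of _ "Pow {..<n}"]) auto

lemma card_H: "card (H n k) = n choose k"
  unfolding H_def using n_subsets[of "{..<n}" k] by simp

lemma card_H_disjoint:
  assumes "D \<subseteq> {..<n}"
  shows "card {T \<in> H n k. T \<inter> D = {}} = (n - card D) choose k"
proof -
  have "{T \<in> H n k. T \<inter> D = {}} = {T. T \<subseteq> {..<n} - D \<and> card T = k}"
    unfolding H_def by blast
  moreover have "card ({..<n} - D) = n - card D"
    using assms finite_subset[OF assms] by (simp add: card_Diff_subset)
  ultimately show ?thesis by (simp add: n_subsets)
qed

lemma votes_eq_card: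
  "votes pihat obs m n k a = card {T \<in> H n k. pihat obs (Ablate m T) = a}"
  unfolding votes_def using finite_H by (simp add: sum.If_cases Int_def conj_commute)

lemma Ablate_eq_if_disjoint:
  assumes "length m = n" and "length m' = n"
    and "T \<inter> {i. i < n \<and> m ! i \<noteq> m' ! i} = {}"
  shows "Ablate m T = Ablate m' T"
  unfolding Ablate_def using assms by (intro nths_cong) auto

lemma votes_le_if_not_benign:
  assumes "length m_benign = n" and "length m_adv = n"
    and "card {i. i < n \<and> m_benign ! i \<noteq> m_adv ! i} \<le> C"
    and "a \<notin> benign_actions pihat obs m_benign n k"
  shows "votes pihat obs m_adv n k a \<le> (n choose k) - ((n - C) choose k)"
proof -
  define D where "D = {i. i < n \<and> m_benign ! i \<noteq> m_adv ! i}"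
  define V where "V = {T \<in> H n k. pihat obs (Ablate m_adv T) = a}"
  define G where "G = {T \<in> H n k. T \<inter> D = {}}"
  have "V \<subseteq> H n k - G"
  proof
    fix T assume "T \<in> V"
    moreover have "T \<in> G \<Longrightarrow> Ablate m_adv T = Ablate m_benign T"
      using assms(1,2) unfolding G_def D_def by (intro Ablate_eq_if_disjoint) auto
    ultimately show "T \<in> H n k - G"
      using assms(4) unfolding V_def benign_actions_def by auto
  qed
  then have "card V \<le> card (H n k) - card G"
    using finite_H card_mono[of "H n k - G" V] card_Diff_subset[of G "H n k"]
    by (simp add: G_def finite_subset)
  moreover have "(n - C) choose k \<le> card G"
    unfolding G_def D_def using assms(3)
    by (subst card_H_disjoint) (auto intro: binomial_right_mono)
  ultimately show ?thesis
    unfolding votes_eq_card V_def card_H by linarith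
qed

theorem theorem1:
  fixes N C k :: nat
    and pihat :: "'o \<Rightarrow> 'm list \<Rightarrow> 'a::countable"
    and obs :: 'o
    and m_benign m_adv :: "'m list"
    and a_tilde :: 'a
  assumes "N \<ge> 2" and "k \<ge> 1"
    and "2 * C < N - 1" and "k \<le> N - 1"
    and "2 * ((N - 1 - C) choose k) \<ge> (N - 1) choose k"
    and "length m_benign = N - 1" and "length m_adv = N - 1"
    and "card {i. i < N - 1 \<and> m_benign ! i \<noteq> m_adv ! i} \<le> C"
    and "\<forall>a. votes pihat obs m_adv (N - 1) k a \<le> votes pihat obs m_adv (N - 1) k a_tilde"
    and "int (votes pihat obs m_adv (N - 1) k a_tilde)
           > int ((N - 1) choose k) - int ((N - 1 - C) choose k)"
  shows "a_tilde \<in> benign_actions pihat obs m_benign (N - 1) k"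
proof (rule ccontr)
  assume "a_tilde \<notin> benign_actions pihat obs m_benign (N - 1) k"
  then have "votes pihat obs m_adv (N - 1) k a_tilde \<le> ((N - 1) choose k) - ((N - 1 - C) choose k)"
    using assms(6-8) by (rule votes_le_if_not_benign[rotated 3])
  moreover have "(N - 1 - C) choose k \<le> (N - 1) choose k"
    by (rule binomial_right_mono) simp
  ultimately show False using assms(10) by linarith
qed

end
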